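(* Let $M \ge 3$ and $K \ge 2$ be integers, let $P_{\text{r}} > 0$, and let $\beta_1,\dots,\beta_K > 0$. Let $\mathbf{G} = \mathbf{H}\mathbf{D}^{1/2} \in \mathbb{C}^{M\times K}$, where $\mathbf{H}$ has i.i.d. $\mathcal{CN}(0,1)$ entries and $\mathbf{D} = \mathrm{diag}(\beta_1,\dots,\beta_K)$, and let $\mathbf{g}_i$ denote the $i$-th column of $\mathbf{G}$. For an integer $a$ and $t \in \{1,\dots,K-1\}$, let $j(a,t)$ be the unique element of $\{1,\dots,K\}$ congruent to $a+t$ modulo $K$. For $k \in \{1,\dots,K\}$ and $t \in \{1,\dots,K-1\}$, let $\mathcal{S}_{k,t} = \{ i \in \{1,\dots,K\} : j(i,t) \neq j(k,t) \text{ and } j(i,t) \neq j(k-t,t)\}$ and define $$\mathtt{R}^{\mathrm{dl},(t)}_{k} = \mathbb{E}\left\{\log_2\left(1 + \frac{\frac{P_{\text{r}}}{M\sum_{i=1}^K \beta_i}\|\mathbf{g}_k\|^4}{\frac{P_{\text{r}}}{M\sum_{i=1}^K \beta_i}\sum_{i\in\mathcal{S}_{k,t}} |\mathbf{g}_k^H\mathbf{g}_i|^2 + 1}\right)\right\},$$ the expectation being over $\mathbf{G}$. Then $$\mathtt{R}^{\mathrm{dl},(t)}_{k} \ \ge\ \log_2\left(1 + \frac{P_{\text{r}}(M-1)(M-2)\beta_k^2}{P_{\text{r}}(M-2)\beta_k\sum_{i\in\mathcal{S}_{k,t}}\beta_i + M\sum_{i=1}^K\beta_i}\right).$$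
   Context: Model: a decode-and-forward multi-way relay with an $M$-antenna relay and $K$ single-antenna users; $\mathbf{G}$ is the user–relay channel, with small-scale fading $\mathbf{H}$ and large-scale fading coefficients $\beta_k$; $P_{\text{r}}$ is the normalized relay transmit power; the quantity $\mathtt{R}^{\mathrm{dl},(t)}_{k}$ is the downlink spectral efficiency of user $k$ in broadcast time-slot $t$ of the conventional protocol, where the relay sends $x_{j(k,t)}$ to user $k$ and user $k$ has removed its own symbol $x_k = x_{j(k-t,t)}$. Note $j(k-t,t)=k$. *)

theory Defs
  imports "HOL-Probability.Probability"
begin

text \<open>Circularly-symmetric complex Gaussian CN(0,1): real and imaginary parts
  independent real normals with mean 0 and variance 1/2 (std. deviation sqrt(1/2)).\<close>
definition CN01 :: "complex measure" where
  "CN01 = distr (density lborel (normal_density 0 (sqrt (1/2))) \<Otimes>\<^sub>M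
                 density lborel (normal_density 0 (sqrt (1/2))))
               borel (\<lambda>(x, y). Complex x y)"

text \<open>Law of the small-scale fading matrix H (entries indexed by antenna m in 1..M and
  user i in 1..K), i.i.d. CN(0,1).\<close>
definition channel_measure :: "nat \<Rightarrow> nat \<Rightarrow> (nat \<times> nat \<Rightarrow> complex) measure" where
  "channel_measure M K = PiM ({1..M} \<times> {1..K}) (\<lambda>_. CN01)"

definition gcol :: "(nat \<Rightarrow> real) \<Rightarrow> (nat \<times> nat \<Rightarrow> complex) \<Rightarrow> nat \<Rightarrow> nat \<Rightarrow> complex" where
  "gcol \<beta> H i m = H (m, i) * complex_of_real (sqrt (\<beta> i))"

definition gnorm2 :: "nat \<Rightarrow> (nat \<Rightarrow> real) \<Rightarrow> (nat \<times> nat \<Rightarrow> complex) \<Rightarrow> nat \<Rightarrow> real" where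
  "gnorm2 M \<beta> H i = (\<Sum>m = 1..M. (cmod (gcol \<beta> H i m))\<^sup>2)"

definition ginner :: "nat \<Rightarrow> (nat \<Rightarrow> real) \<Rightarrow> (nat \<times> nat \<Rightarrow> complex) \<Rightarrow> nat \<Rightarrow> nat \<Rightarrow> complex" where
  "ginner M \<beta> H k i = (\<Sum>m = 1..M. cnj (gcol \<beta> H k m) * gcol \<beta> H i m)"

definition jidx :: "nat \<Rightarrow> int \<Rightarrow> nat \<Rightarrow> int" where
  "jidx K a t = (a + int t - 1) mod int K + 1"

definition Sset :: "nat \<Rightarrow> nat \<Rightarrow> nat \<Rightarrow> nat set" where
  "Sset K k t = {i \<in> {1..K}. jidx K (int i) t \<noteq> jidx K (int k) t
                               \<and> jidx K (int i) t \<noteq> jidx K (int k - int t) t}"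

definition Rdl :: "nat \<Rightarrow> nat \<Rightarrow> real \<Rightarrow> (nat \<Rightarrow> real) \<Rightarrow> nat \<Rightarrow> nat \<Rightarrow> real" where
  "Rdl M K Pr \<beta> k t =
     (let \<rho> = Pr / (real M * (\<Sum>i = 1..K. \<beta> i)) in
      \<integral>H. log 2 (1 + (\<rho> * (gnorm2 M \<beta> H k)\<^sup>2) /
                     (\<rho> * (\<Sum>i\<in>Sset K k t. (cmod (ginner M \<beta> H k i))\<^sup>2) + 1))
        \<partial>channel_measure M K)"

end

(*
  By Jensen's inequality for the convex function z \<mapsto> log2 (1 + 1/z), the rate is at least
  log2 (1 + 1/E[Z]), where Z = 1/SINR is the interference-plus-noise to signal ratio.
  Writing g_i = sqrt(beta_i) h_i, Z is a linear combination of |h_k^H h_i|^2 / ||h_k||^4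
  and 1 / ||h_k||^4, whose expectations are 1/(M-1) and 1/((M-1)(M-2)). They are computed
  from 1/w^2 = \<integral>_0^\<infinity> s e^(-sw) ds and Tonelli: the Gaussian Laplace transforms
  E[e^(-s||h_k||^2)] = (1+s)^(-M) and E[|h_k^H h_i|^2 e^(-s||h_k||^2)] = M (1+s)^(-(M+1)),
  obtained entrywise from the independence of the entries of H, reduce them to
  \<integral>_0^\<infinity> s (1+s)^(-(m+3)) ds = 1/((m+1)(m+2)).
*)
theory Submission
  imports Defs
begin

lemma prod_Times: "(\<Prod>p\<in>A \<times> B. g p) = (\<Prod>a\<in>A. \<Prod>b\<in>B. g (a, b))"
  by (simp add: prod.cartesian_product)

lemma prod_eq_two_factors:
  assumes "finite J" "k \<in> J" "i \<in> J" "k \<noteq> i"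
    and "\<And>j. j \<in> J \<Longrightarrow> j \<noteq> k \<Longrightarrow> j \<noteq> i \<Longrightarrow> f j = 1"
  shows "prod f J = f k * (f i :: 'a::comm_monoid_mult)"
proof -
  have "prod f J = prod f {k, i}"
    using assms by (intro prod.mono_neutral_right) auto
  then show ?thesis using assms(4) by simp
qed

lemma prod_if_eq_else_const:
  assumes "finite A" "m0 \<in> A"
  shows "(\<Prod>m\<in>A. if m = m0 then a else b) = (a :: 'a::comm_monoid_mult) * b ^ (card A - 1)"
proof -
  have "(\<Prod>m\<in>A - {m0}. if m = m0 then a else b) = (\<Prod>m\<in>A - {m0}. b)"
    by (rule prod.cong) auto
  then show ?thesis
    using prod.remove[OF assms, of "\<lambda>m. if m = m0 then a else b"] assms
    by (simp add: card_Diff_singleton)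
qed

lemma has_real_derivative_inverse_one_plus_power:
  fixes s :: real
  assumes "1 + s \<noteq> 0"
  shows "((\<lambda>s. inverse (1 + s) ^ Suc n) has_real_derivative - (real (Suc n) * inverse (1 + s) ^ (n + 2))) (at s)"
proof -
  have "(1 + s) ^ Suc n * (1 + s) ^ Suc n = (1 + s) ^ n * (1 + s) ^ Suc (Suc n)"
    by (simp add: algebra_simps)
  then show ?thesis using assms
    by (auto intro!: derivative_eq_intros simp: power_inverse field_simps simp del: power_Suc)
qed

lemma nn_integral_div_one_plus_power:
  fixes m :: nat
  shows "(\<integral>\<^sup>+s. ennreal (s / (1 + s) ^ (m + 3)) * indicator {0..} s \<partial>lborel) =
    ennreal (1 / (real (m + 1) * real (m + 2)))"
proof -
  define F where "F s = inverse (1 + s) ^ Suc (Suc m) / real (m + 2) - inverse (1 + s) ^ Suc m / real (m + 1)"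
    for s :: real
  have "(F has_real_derivative s / (1 + s) ^ (m + 3)) (at s)" if "0 \<le> s" for s
  proof -
    have "(x - 1) / x ^ Suc n = inverse x ^ n - inverse x ^ Suc n" if "x \<noteq> 0" for x :: real and n
      using that by (simp add: power_inverse diff_divide_distrib divide_inverse inverse_mult_distrib algebra_simps)
    from this[of "1 + s" "m + 2"] that
    have "s / (1 + s) ^ (m + 3) = inverse (1 + s) ^ (m + 2) - inverse (1 + s) ^ (m + 3)"
      by (simp only: add_diff_cancel_left' add_Suc_right numeral_2_eq_2 numeral_3_eq_3)
    then have eq: "s / (1 + s) ^ (m + 3) = - (real (Suc (Suc m)) * inverse (1 + s) ^ (Suc m + 2)) / real (m + 2) -
      - (real (Suc m) * inverse (1 + s) ^ (m + 2)) / real (m + 1)"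
      by (simp add: eval_nat_numeral del: power_Suc of_nat_Suc)
    show ?thesis
      unfolding F_def eq using that
      by (intro DERIV_diff DERIV_cdivide has_real_derivative_inverse_one_plus_power) simp_all
  qed
  moreover have "(F \<longlongrightarrow> 0) at_top"
  proof -
    have "((\<lambda>s::real. inverse (1 + s)) \<longlongrightarrow> 0) at_top"
      by (rule tendsto_inverse_0_at_top, rule filterlim_tendsto_add_at_top[OF tendsto_const filterlim_ident])
    then have "(F \<longlongrightarrow> 0 ^ Suc (Suc m) / real (m + 2) - 0 ^ Suc m / real (m + 1)) at_top"
      unfolding F_def by (intro tendsto_intros) auto
    then show ?thesis by simp
  qed
  ultimately have "(\<integral>\<^sup>+s. ennreal (s / (1 + s) ^ (m + 3)) * indicator {0..} s \<partial>lborel) = ennreal (0 - F 0)"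
    by (intro nn_integral_FTC_atLeast) auto
  then show ?thesis by (simp add: F_def field_simps)
qed

text \<open>For \<open>w > 0\<close> this is 1/w^2; by Tonelli it turns inverse moments E[g / W^2] into
  integrals of the Laplace transforms E[g e^(-sW)].\<close>
definition laplace_inv_sq :: "real \<Rightarrow> ennreal" where
  "laplace_inv_sq w = (\<integral>\<^sup>+s. ennreal (s * exp (- (s * w))) * indicator {0..} s \<partial>lborel)"

lemma measurable_laplace_inv_sq [measurable]: "laplace_inv_sq \<in> borel_measurable borel"
  unfolding laplace_inv_sq_def by (rule lborel.borel_measurable_nn_integral) measurable

lemma laplace_inv_sq_pos:
  assumes w: "w > 0"
  shows "laplace_inv_sq w = ennreal (1 / w\<^sup>2)"
proof -
  have "ennreal w * laplace_inv_sq w = (\<integral>\<^sup>+x. ennreal (erlang_density 0 w x * x ^ 1) \<partial>lborel)"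
    unfolding laplace_inv_sq_def
    by (subst nn_integral_cmult[symmetric])
      (auto intro!: nn_integral_cong simp: erlang_density_def ennreal_mult'[symmetric] mult_ac w
        less_imp_le split: split_indicator)
  also have "\<dots> = ennreal (1 / w)"
    using nn_integral_erlang_ith_moment[OF w, of 0 1] by simp
  finally have "ennreal (1 / w) * (ennreal w * laplace_inv_sq w) = ennreal (1 / w) * ennreal (1 / w)"
    by simp
  then show ?thesis
    using w by (simp add: mult.assoc[symmetric] power2_eq_square flip: ennreal_mult'')
qed

lemma laplace_inv_sq_zero: "laplace_inv_sq 0 = \<top>"
proof (rule ccontr)
  assume "laplace_inv_sq 0 \<noteq> \<top>"
  then obtain r where r: "laplace_inv_sq 0 = ennreal r" "r \<ge> 0"
    by (cases "laplace_inv_sq 0") auto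
  have w: "1 / (r + 1) > 0" using r by simp
  have "ennreal ((r + 1)\<^sup>2) = laplace_inv_sq (1 / (r + 1))"
    by (simp add: laplace_inv_sq_pos[OF w] power_one_over)
  also have "\<dots> \<le> laplace_inv_sq 0"
    unfolding laplace_inv_sq_def using r
    by (intro nn_integral_mono) (auto split: split_indicator intro!: ennreal_leI mult_left_le)
  finally have "(r + 1)\<^sup>2 \<le> r" using r by (simp add: ennreal_le_iff)
  moreover have "r < (r + 1)\<^sup>2" using r by (simp add: power2_eq_square algebra_simps add_pos_nonneg)
  ultimately show False by simp
qed

lemma nn_integral_mult_laplace_inv_sq:
  fixes g W :: "'a \<Rightarrow> real"
  assumes N: "sigma_finite_measure N"
    and [measurable]: "W \<in> borel_measurable N" "g \<in> borel_measurable N" "h \<in> borel_measurable borel"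
    and g_nonneg: "\<And>x. g x \<ge> 0"
    and transform: "\<And>s. s \<ge> 0 \<Longrightarrow> has_bochner_integral N (\<lambda>x. g x * exp (- (s * W x))) (h s)"
  shows "(\<integral>\<^sup>+x. ennreal (g x) * laplace_inv_sq (W x) \<partial>N) =
         (\<integral>\<^sup>+s. ennreal (s * h s) * indicator {0..} s \<partial>lborel)"
proof -
  interpret pair_sigma_finite lborel N
    using N by (simp add: pair_sigma_finite_def sigma_finite_lborel)
  have "(\<integral>\<^sup>+x. ennreal (g x) * laplace_inv_sq (W x) \<partial>N) =
      (\<integral>\<^sup>+x. \<integral>\<^sup>+s. ennreal (s * (g x * exp (- (s * W x)))) * indicator {0..} s \<partial>lborel \<partial>N)"
    unfolding laplace_inv_sq_def using g_nonneg
    by (subst nn_integral_cmult[symmetric], measurable)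
      (auto intro!: nn_integral_cong simp: ennreal_mult'[symmetric] mult_ac split: split_indicator)
  also have "\<dots> = (\<integral>\<^sup>+s. \<integral>\<^sup>+x. ennreal (s * (g x * exp (- (s * W x)))) * indicator {0..} s \<partial>N \<partial>lborel)"
    by (rule Fubini') measurable
  also have "\<dots> = (\<integral>\<^sup>+s. ennreal (s * h s) * indicator {0..} s \<partial>lborel)"
  proof (rule nn_integral_cong)
    fix s :: real
    show "(\<integral>\<^sup>+x. ennreal (s * (g x * exp (- (s * W x)))) * indicator {0..} s \<partial>N) =
        ennreal (s * h s) * indicator {0..} s"
    proof (cases "s \<ge> 0")
      case True
      have "has_bochner_integral N (\<lambda>x. s * (g x * exp (- (s * W x)))) (s * h s)"
        using transform[OF True] by (rule has_bochner_integral_mult_right)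
      then have "(\<integral>\<^sup>+x. ennreal (s * (g x * exp (- (s * W x)))) \<partial>N) = ennreal (s * h s)"
        using True g_nonneg by (subst nn_integral_eq_integral) (auto simp: has_bochner_integral_iff)
      then show ?thesis using True by simp
    qed simp
  qed
  finally show ?thesis .
qed

lemma has_bochner_integral_div_sq_of_laplace_inv_sq:
  fixes g W :: "'a \<Rightarrow> real"
  assumes [measurable]: "W \<in> borel_measurable N" "g \<in> borel_measurable N"
    and g_nonneg: "\<And>x. g x \<ge> 0" and W_pos: "AE x in N. W x > 0"
    and nn: "(\<integral>\<^sup>+x. ennreal (g x) * laplace_inv_sq (W x) \<partial>N) = ennreal r" and r: "r \<ge> 0"
  shows "has_bochner_integral N (\<lambda>x. g x / (W x)\<^sup>2) r"
proof -
  have "(\<integral>\<^sup>+x. ennreal (g x / (W x)\<^sup>2) \<partial>N) = ennreal r"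
    unfolding nn[symmetric] using W_pos g_nonneg
    by (intro nn_integral_cong_AE) (auto simp: laplace_inv_sq_pos divide_inverse ennreal_mult')
  then show ?thesis
    using g_nonneg r by (intro has_bochner_integral_nn_integral) auto
qed

section \<open>Jensen's inequality for \<open>log (1 + 1 / z)\<close>\<close>

lemma convex_on_log_one_plus_inverse:
  assumes b: "b > 1"
  shows "convex_on {0<..} (\<lambda>z. log b (1 + 1 / z))"
proof (rule convex_on_realI)
  show "((\<lambda>z. log b (1 + 1 / z)) has_real_derivative - 1 / (z * (z + 1)) / ln b) (at z)"
    if "z \<in> {0<..}" for z
  proof -
    have "((\<lambda>z. ln (1 + 1 / z)) has_real_derivative - 1 / (z * (z + 1))) (at z)"
      using that by (auto intro!: derivative_eq_intros simp: field_simps)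
    then show ?thesis unfolding log_def by (rule DERIV_cdivide)
  qed
  show "- 1 / (z * (z + 1)) / ln b \<le> - 1 / (y * (y + 1)) / ln b"
    if "z \<in> {0<..}" "y \<in> {0<..}" "z \<le> y" for z y
    using that b by (intro divide_right_mono) (auto intro!: mult_mono simp: divide_simps)
qed simp

lemma (in prob_space) log_one_plus_inverse_expectation_le:
  assumes "integrable M Z" "AE x in M. Z x > 0" "integrable M (\<lambda>x. log b (1 + 1 / Z x))" "b > 1"
  shows "log b (1 + 1 / expectation Z) \<le> expectation (\<lambda>x. log b (1 + 1 / Z x))"
  using assms by (intro jensens_inequality[where I = "{0<..}"] convex_on_log_one_plus_inverse) auto

lemma log_one_plus_le_sqrt:
  fixes x b :: real
  assumes "x \<ge> 0" "b > 1"
  shows "log b (1 + x) \<le> 2 * sqrt x / ln b"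
proof -
  have "log b (1 + x) \<le> log b ((1 + sqrt x)\<^sup>2)"
    using assms by (intro log_le_cancel_iff[THEN iffD2])
      (auto simp: power2_eq_square algebra_simps intro!: add_pos_nonneg)
  also have "\<dots> = 2 * ln (1 + sqrt x) / ln b"
    using assms by (simp add: log_def ln_realpow)
  also have "\<dots> \<le> 2 * sqrt x / ln b"
    using assms by (intro divide_right_mono mult_left_mono ln_add_one_self_le_self) auto
  finally show ?thesis .
qed

section \<open>Moments of the complex Gaussian\<close>

lemma (in pair_prob_space) integral_fst_snd_mult:
  fixes g h :: "_ \<Rightarrow> real"
  assumes g: "integrable M1 g" and h: "integrable M2 h"
  shows "integrable (M1 \<Otimes>\<^sub>M M2) (\<lambda>p. g (fst p) * h (snd p))"
    and "(\<integral>p. g (fst p) * h (snd p) \<partial>(M1 \<Otimes>\<^sub>M M2)) = (\<integral>x. g x \<partial>M1) * (\<integral>y. h y \<partial>M2)"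
proof -
  have [measurable]: "g \<in> borel_measurable M1" "h \<in> borel_measurable M2"
    using g h by auto
  show int: "integrable (M1 \<Otimes>\<^sub>M M2) (\<lambda>p. g (fst p) * h (snd p))"
  proof (rule Fubini_integrable)
    show "integrable M1 (\<lambda>x. \<integral>y. norm (g (fst (x, y)) * h (snd (x, y))) \<partial>M2)"
      using g by (simp add: abs_mult)
  qed (use h in auto)
  show "(\<integral>p. g (fst p) * h (snd p) \<partial>(M1 \<Otimes>\<^sub>M M2)) = (\<integral>x. g x \<partial>M1) * (\<integral>y. h y \<partial>M2)"
    using integral_fst'[OF int] by simp
qed

definition gauss_half :: "real measure" where
  "gauss_half = density lborel (normal_density 0 (sqrt (1/2)))"

lemma prob_space_gauss_half: "prob_space gauss_half"
  unfolding gauss_half_def by (rule prob_space_normal_density) simp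

lemma sets_gauss_half [measurable_cong]: "sets gauss_half = sets borel"
  by (simp add: gauss_half_def)

lemma normal_density_half_mult_exp:
  assumes "s \<ge> 0"
  shows "normal_density 0 (sqrt (1/2)) x * exp (- (s * x\<^sup>2)) =
         normal_density 0 (sqrt (1 / (2 * (1 + s)))) x / sqrt (1 + s)"
proof -
  have var: "2 * (sqrt (1 / (2 * (1 + s))))\<^sup>2 = 1 / (1 + s)"
    using assms by (simp add: divide_simps)
  have "2 * pi * (sqrt (1 / (2 * (1 + s))))\<^sup>2 = pi / (1 + s)"
    using assms by (simp add: field_simps)
  then have "sqrt (2 * pi * (sqrt (1 / (2 * (1 + s))))\<^sup>2) = sqrt pi / sqrt (1 + s)"
    using assms by (simp add: real_sqrt_divide)
  moreover have "- (x - 0)\<^sup>2 / (2 * (sqrt (1 / (2 * (1 + s))))\<^sup>2) = - x\<^sup>2 + - (s * x\<^sup>2)"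
    unfolding var using assms by (simp add: algebra_simps)
  ultimately show ?thesis
    using assms by (simp add: normal_density_def exp_add[symmetric])
qed

lemma gauss_half_exp_sq:
  assumes "s \<ge> 0"
  shows "integrable gauss_half (\<lambda>x. exp (- (s * x\<^sup>2)))"
    and "(\<integral>x. exp (- (s * x\<^sup>2)) \<partial>gauss_half) = 1 / sqrt (1 + s)"
proof -
  have "integrable lborel (\<lambda>x. normal_density 0 (sqrt (1 / (2 * (1 + s)))) x / sqrt (1 + s))"
    using assms by (intro integrable_divide) simp
  then show "integrable gauss_half (\<lambda>x. exp (- (s * x\<^sup>2)))"
    unfolding gauss_half_def using assms
    by (subst integrable_density) (auto simp: normal_density_nonneg normal_density_half_mult_exp)
  have "(\<integral>x. exp (- (s * x\<^sup>2)) \<partial>gauss_half) =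
        (\<integral>x. normal_density 0 (sqrt (1 / (2 * (1 + s)))) x \<partial>lborel) / sqrt (1 + s)"
    unfolding gauss_half_def using assms
    by (subst integral_density) (auto simp: normal_density_nonneg normal_density_half_mult_exp)
  then show "(\<integral>x. exp (- (s * x\<^sup>2)) \<partial>gauss_half) = 1 / sqrt (1 + s)"
    using assms by (simp add: integral_normal_density)
qed

lemma gauss_half_sq_exp_sq:
  assumes "s \<ge> 0"
  shows "integrable gauss_half (\<lambda>x. x\<^sup>2 * exp (- (s * x\<^sup>2)))"
    and "(\<integral>x. x\<^sup>2 * exp (- (s * x\<^sup>2)) \<partial>gauss_half) = 1 / (2 * (1 + s) * sqrt (1 + s))"
proof -
  define \<sigma> where "\<sigma> = sqrt (1 / (2 * (1 + s)))"
  have \<sigma>: "\<sigma> > 0" using assms by (simp add: \<sigma>_def)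
  have dens: "normal_density 0 (sqrt (1/2)) x * (x\<^sup>2 * exp (- (s * x\<^sup>2))) =
      normal_density 0 \<sigma> x * (x - 0) ^ (2 * 1) / sqrt (1 + s)" for x
    using normal_density_half_mult_exp[OF assms, of x] unfolding \<sigma>_def[symmetric]
    by (simp add: field_simps power2_eq_square)
  have "integrable lborel (\<lambda>x. normal_density 0 \<sigma> x * (x - 0) ^ (2 * 1) / sqrt (1 + s))"
    using integrable_normal_moment[OF \<sigma>, of 0 "2 * 1"] by (intro integrable_divide) simp
  then show "integrable gauss_half (\<lambda>x. x\<^sup>2 * exp (- (s * x\<^sup>2)))"
    unfolding gauss_half_def
    by (subst integrable_density) (auto simp: normal_density_nonneg dens)
  have "(\<integral>x. x\<^sup>2 * exp (- (s * x\<^sup>2)) \<partial>gauss_half) =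
        (\<integral>x. normal_density 0 \<sigma> x * (x - 0) ^ (2 * 1) \<partial>lborel) / sqrt (1 + s)"
    unfolding gauss_half_def
    by (subst integral_density) (auto simp: normal_density_nonneg dens)
  also have "\<dots> = \<sigma>\<^sup>2 / sqrt (1 + s)"
    using integral_normal_moment_even[OF \<sigma>, of 0 1] by simp
  finally show "(\<integral>x. x\<^sup>2 * exp (- (s * x\<^sup>2)) \<partial>gauss_half) = 1 / (2 * (1 + s) * sqrt (1 + s))"
    using assms by (simp add: \<sigma>_def)
qed

lemma gauss_half_mean:
  shows "integrable gauss_half (\<lambda>x. x)" and "(\<integral>x. x \<partial>gauss_half) = 0"
  unfolding gauss_half_def
  using integrable_normal_moment_nz_1[of "sqrt (1/2)" 0] integral_normal_moment_nz_1[of "sqrt (1/2)" 0]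
  by (subst integrable_density integral_density; auto simp: normal_density_nonneg)+

lemma pair_prob_space_gauss_half: "pair_prob_space gauss_half gauss_half"
  by (simp add: pair_prob_space_def pair_sigma_finite_def prob_space_gauss_half
      prob_space_imp_sigma_finite)

lemma CN01_eq_distr:
  "CN01 = distr (gauss_half \<Otimes>\<^sub>M gauss_half) borel (\<lambda>p. Complex (fst p) (snd p))"
  unfolding CN01_def gauss_half_def by (simp add: case_prod_beta')

lemma measurable_Complex_pair [measurable]:
  "(\<lambda>p. Complex (fst p) (snd p)) \<in> measurable (gauss_half \<Otimes>\<^sub>M gauss_half) borel"
  unfolding Complex_eq by measurable

lemma prob_space_CN01: "prob_space CN01"
proof -
  interpret pair_prob_space gauss_half gauss_half by (rule pair_prob_space_gauss_half)
  show ?thesis unfolding CN01_eq_distr by (rule prob_space_distr) measurable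
qed

lemma sets_CN01 [measurable_cong]: "sets CN01 = sets borel"
  unfolding CN01_eq_distr by simp

lemma integrable_CN01_iff:
  fixes f :: "complex \<Rightarrow> 'b::{banach, second_countable_topology}"
  assumes [measurable]: "f \<in> borel_measurable borel"
  shows "integrable CN01 f \<longleftrightarrow>
    integrable (gauss_half \<Otimes>\<^sub>M gauss_half) (\<lambda>p. f (Complex (fst p) (snd p)))"
  unfolding CN01_eq_distr by (rule integrable_distr_eq) measurable

lemma integral_CN01:
  fixes f :: "complex \<Rightarrow> 'b::{banach, second_countable_topology}"
  assumes [measurable]: "f \<in> borel_measurable borel"
  shows "integral\<^sup>L CN01 f = (\<integral>p. f (Complex (fst p) (snd p)) \<partial>(gauss_half \<Otimes>\<^sub>M gauss_half))"
  unfolding CN01_eq_distr by (rule integral_distr) measurable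

lemma CN01_exp_sq:
  assumes s: "s \<ge> 0"
  shows "integrable CN01 (\<lambda>z. exp (- (s * (cmod z)\<^sup>2)))"
    and "(\<integral>z. exp (- (s * (cmod z)\<^sup>2)) \<partial>CN01) = 1 / (1 + s)"
proof -
  interpret pair_prob_space gauss_half gauss_half by (rule pair_prob_space_gauss_half)
  note prod = integral_fst_snd_mult[OF gauss_half_exp_sq(1)[OF s] gauss_half_exp_sq(1)[OF s]]
  have split: "exp (- (s * (cmod (Complex (fst p) (snd p)))\<^sup>2)) =
       exp (- (s * (fst p)\<^sup>2)) * exp (- (s * (snd p)\<^sup>2))" for p
    by (simp add: cmod_power2 exp_add[symmetric] algebra_simps)
  show "integrable CN01 (\<lambda>z. exp (- (s * (cmod z)\<^sup>2)))"
    by (subst integrable_CN01_iff) (use prod(1) in \<open>auto simp: split\<close>)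
  show "(\<integral>z. exp (- (s * (cmod z)\<^sup>2)) \<partial>CN01) = 1 / (1 + s)"
    using prod(2) s
    by (subst integral_CN01) (auto simp: split gauss_half_exp_sq(2) real_sqrt_mult[symmetric])
qed

lemma CN01_sq_exp_sq:
  assumes s: "s \<ge> 0"
  shows "integrable CN01 (\<lambda>z. (cmod z)\<^sup>2 * exp (- (s * (cmod z)\<^sup>2)))"
    and "(\<integral>z. (cmod z)\<^sup>2 * exp (- (s * (cmod z)\<^sup>2)) \<partial>CN01) = 1 / (1 + s)\<^sup>2"
proof -
  interpret pair_prob_space gauss_half gauss_half by (rule pair_prob_space_gauss_half)
  note prod1 = integral_fst_snd_mult[OF gauss_half_sq_exp_sq(1)[OF s] gauss_half_exp_sq(1)[OF s]]
  note prod2 = integral_fst_snd_mult[OF gauss_half_exp_sq(1)[OF s] gauss_half_sq_exp_sq(1)[OF s]]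
  have split: "(cmod (Complex (fst p) (snd p)))\<^sup>2 * exp (- (s * (cmod (Complex (fst p) (snd p)))\<^sup>2)) =
       (fst p)\<^sup>2 * exp (- (s * (fst p)\<^sup>2)) * exp (- (s * (snd p)\<^sup>2)) +
       exp (- (s * (fst p)\<^sup>2)) * ((snd p)\<^sup>2 * exp (- (s * (snd p)\<^sup>2)))" for p
    by (simp add: cmod_power2 exp_add[symmetric] algebra_simps)
  show "integrable CN01 (\<lambda>z. (cmod z)\<^sup>2 * exp (- (s * (cmod z)\<^sup>2)))"
    by (subst integrable_CN01_iff) (use prod1(1) prod2(1) in \<open>auto simp: split\<close>)
  have "(\<integral>z. (cmod z)\<^sup>2 * exp (- (s * (cmod z)\<^sup>2)) \<partial>CN01) =
        2 * (1 / (2 * (1 + s) * sqrt (1 + s)) * (1 / sqrt (1 + s)))"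
    using prod1 prod2 s
    by (subst integral_CN01) (auto simp: split gauss_half_exp_sq(2) gauss_half_sq_exp_sq(2))
  also have "\<dots> = 1 / (1 + s)\<^sup>2"
  proof -
    have "sqrt (1 + s) * sqrt (1 + s) = 1 + s" using s by simp
    then show ?thesis using s by (simp add: divide_simps power2_eq_square) (simp add: algebra_simps)
  qed
  finally show "(\<integral>z. (cmod z)\<^sup>2 * exp (- (s * (cmod z)\<^sup>2)) \<partial>CN01) = 1 / (1 + s)\<^sup>2" .
qed

lemma CN01_mean:
  shows "integrable CN01 (\<lambda>z. z)" and "(\<integral>z. z \<partial>CN01) = 0"
proof -
  interpret pair_prob_space gauss_half gauss_half by (rule pair_prob_space_gauss_half)
  note re = integral_fst_snd_mult[OF gauss_half_mean(1) M1.integrable_const[of 1]]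
  note im = integral_fst_snd_mult[OF M1.integrable_const[of 1] gauss_half_mean(1)]
  have split: "Complex (fst p) (snd p) = of_real (fst p * 1) + \<i> * of_real (1 * snd p)" for p
    by (simp add: Complex_eq)
  show "integrable CN01 (\<lambda>z. z)"
    by (subst integrable_CN01_iff, measurable) (use re(1) im(1) in \<open>auto simp only: split
      intro!: Bochner_Integration.integrable_add integrable_mult_right integrable_of_real\<close>)
  show "(\<integral>z. z \<partial>CN01) = 0"
    using re im
    by (subst integral_CN01, measurable)
      (simp only: split Bochner_Integration.integral_add integrable_mult_right integrable_of_real
        integral_mult_right_zero integral_complex_of_real, simp add: gauss_half_mean(2))
qed

lemma integrable_CN01_quadratic_bound:
  fixes f :: "complex \<Rightarrow> complex"
  assumes [measurable]: "f \<in> borel_measurable borel"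
    and bound: "\<And>z. norm (f z) \<le> C * (1 + (cmod z)\<^sup>2)"
  shows "integrable CN01 f"
proof (rule Bochner_Integration.integrable_bound)
  interpret prob_space CN01 by (rule prob_space_CN01)
  show "integrable CN01 (\<lambda>z. C * (1 + (cmod z)\<^sup>2))"
    using CN01_sq_exp_sq(1)[of 0] by simp
  show "AE z in CN01. norm (f z) \<le> norm (C * (1 + (cmod z)\<^sup>2))"
    using bound by (auto intro!: AE_I2 order_trans[OF bound])
qed measurable

lemma measurable_cnj [measurable]: "cnj \<in> borel_measurable borel"
  by (intro borel_measurable_continuous_onI continuous_intros)

section \<open>Laplace transforms of the column norm\<close>

definition col_norm2 :: "nat \<Rightarrow> nat \<Rightarrow> (nat \<times> nat \<Rightarrow> complex) \<Rightarrow> real" where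
  "col_norm2 M k H = (\<Sum>m = 1..M. (cmod (H (m, k)))\<^sup>2)"

definition col_inner :: "nat \<Rightarrow> nat \<Rightarrow> nat \<Rightarrow> (nat \<times> nat \<Rightarrow> complex) \<Rightarrow> complex" where
  "col_inner M k i H = (\<Sum>m = 1..M. cnj (H (m, k)) * H (m, i))"

lemma col_norm2_nonneg: "col_norm2 M k H \<ge> 0"
  unfolding col_norm2_def by (intro sum_nonneg) simp

lemma prob_space_channel_measure: "prob_space (channel_measure M K)"
  unfolding channel_measure_def by (rule prob_space_PiM) (rule prob_space_CN01)

lemma channel_integral_prod:
  fixes f :: "nat \<times> nat \<Rightarrow> complex \<Rightarrow> complex"
  assumes "\<And>p. p \<in> {1..M} \<times> {1..K} \<Longrightarrow> integrable CN01 (f p)"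
  shows "integrable (channel_measure M K) (\<lambda>H. \<Prod>p\<in>{1..M} \<times> {1..K}. f p (H p))"
    and "(\<integral>H. (\<Prod>p\<in>{1..M} \<times> {1..K}. f p (H p)) \<partial>channel_measure M K) =
         (\<Prod>p\<in>{1..M} \<times> {1..K}. \<integral>z. f p z \<partial>CN01)"
proof -
  interpret product_sigma_finite "\<lambda>_. CN01"
    by (simp add: product_sigma_finite_def prob_space_CN01 prob_space_imp_sigma_finite)
  show "integrable (channel_measure M K) (\<lambda>H. \<Prod>p\<in>{1..M} \<times> {1..K}. f p (H p))"
    unfolding channel_measure_def by (rule product_integrable_prod) (use assms in auto)
  show "(\<integral>H. (\<Prod>p\<in>{1..M} \<times> {1..K}. f p (H p)) \<partial>channel_measure M K) =
        (\<Prod>p\<in>{1..M} \<times> {1..K}. \<integral>z. f p z \<partial>CN01)"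
    unfolding channel_measure_def by (rule product_integral_prod) (use assms in auto)
qed

lemma measurable_channel_entry:
  assumes "p \<in> {1..M} \<times> {1..K}"
  shows "(\<lambda>H. H p) \<in> borel_measurable (channel_measure M K)"
proof -
  have "(\<lambda>H. H p) \<in> measurable (channel_measure M K) CN01"
    unfolding channel_measure_def using assms by (rule measurable_component_singleton)
  then show ?thesis by (simp add: measurable_cong_sets[OF refl sets_CN01])
qed

lemma measurable_col_norm2:
  assumes "k \<in> {1..K}"
  shows "col_norm2 M k \<in> borel_measurable (channel_measure M K)"
  unfolding col_norm2_def[abs_def]
proof (rule borel_measurable_sum)
  fix m assume "m \<in> {1..M}"
  with assms have [measurable]: "(\<lambda>H. H (m, k)) \<in> borel_measurable (channel_measure M K)"
    by (intro measurable_channel_entry) auto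
  show "(\<lambda>H. (cmod (H (m, k)))\<^sup>2) \<in> borel_measurable (channel_measure M K)" by measurable
qed

lemma measurable_col_inner:
  assumes "k \<in> {1..K}" "i \<in> {1..K}"
  shows "col_inner M k i \<in> borel_measurable (channel_measure M K)"
  unfolding col_inner_def[abs_def]
proof (rule borel_measurable_sum)
  fix m assume "m \<in> {1..M}"
  with assms have [measurable]: "(\<lambda>H. H (m, k)) \<in> borel_measurable (channel_measure M K)"
    "(\<lambda>H. H (m, i)) \<in> borel_measurable (channel_measure M K)"
    by (auto intro!: measurable_channel_entry)
  show "(\<lambda>H. cnj (H (m, k)) * H (m, i)) \<in> borel_measurable (channel_measure M K)" by measurable
qed

lemma integrable_col_norm2:
  assumes k: "k \<in> {1..K}"
  shows "integrable (channel_measure M K) (col_norm2 M k)"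
proof -
  interpret CN01: prob_space CN01 by (rule prob_space_CN01)
  have entry: "integrable (channel_measure M K) (\<lambda>H. (cmod (H q))\<^sup>2)" if q: "q \<in> {1..M} \<times> {1..K}" for q
  proof -
    define f where "f p z = (if p = q then complex_of_real ((cmod z)\<^sup>2) else 1)" for p z
    have "integrable CN01 (f p)" for p
      using integrable_of_real[OF CN01_sq_exp_sq(1)[of 0]] by (cases "p = q") (auto simp: f_def[abs_def])
    then have "integrable (channel_measure M K) (\<lambda>H. \<Prod>p\<in>{1..M} \<times> {1..K}. f p (H p))"
      by (intro channel_integral_prod(1))
    also have "(\<lambda>H. \<Prod>p\<in>{1..M} \<times> {1..K}. f p (H p)) = (\<lambda>H. complex_of_real ((cmod (H q))\<^sup>2))"
      using q by (simp add: f_def prod.delta)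
    finally show ?thesis by (simp only: complex_of_real_integrable_eq)
  qed
  show ?thesis
    unfolding col_norm2_def[abs_def] using k by (intro Bochner_Integration.integrable_sum entry) auto
qed

lemma channel_exp_col_norm2:
  assumes s: "s \<ge> 0" and k: "k \<in> {1..K}"
  shows "integrable (channel_measure M K) (\<lambda>H. exp (- (s * col_norm2 M k H)))"
    and "(\<integral>H. exp (- (s * col_norm2 M k H)) \<partial>channel_measure M K) = 1 / (1 + s) ^ M"
proof -
  define f where "f p z = (if snd p = k then complex_of_real (exp (- (s * (cmod z)\<^sup>2))) else 1)"
    for p :: "nat \<times> nat" and z
  interpret CN01: prob_space CN01 by (rule prob_space_CN01)
  have int_f: "integrable CN01 (f p)" for p
    using CN01_exp_sq(1)[OF s]
    by (cases "snd p = k") (auto simp: f_def[abs_def])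
  have prod_f: "(\<Prod>p\<in>{1..M} \<times> {1..K}. f p (H p)) = of_real (exp (- (s * col_norm2 M k H)))" for H
    using k
    by (simp add: f_def prod_Times if_distrib col_norm2_def sum_distrib_left exp_sum
        flip: of_real_prod sum_negf cong: if_cong)
  have "integrable (channel_measure M K) (\<lambda>H. complex_of_real (exp (- (s * col_norm2 M k H))))"
    unfolding prod_f[symmetric] by (rule channel_integral_prod(1)) (rule int_f)
  then show "integrable (channel_measure M K) (\<lambda>H. exp (- (s * col_norm2 M k H)))"
    by (simp only: complex_of_real_integrable_eq)
  have "complex_of_real (\<integral>H. exp (- (s * col_norm2 M k H)) \<partial>channel_measure M K) =
        (\<Prod>p\<in>{1..M} \<times> {1..K}. \<integral>z. f p z \<partial>CN01)"
    unfolding integral_complex_of_real[symmetric] prod_f[symmetric]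
    by (rule channel_integral_prod(2)) (rule int_f)
  also have "\<dots> = (\<Prod>m\<in>{1..M}. \<Prod>j\<in>{1..K}. if j = k then of_real (1 / (1 + s)) else 1)"
  proof -
    have "(\<integral>z. f p z \<partial>CN01) = (if snd p = k then of_real (1 / (1 + s)) else 1)" for p
      using CN01_exp_sq(2)[OF s] CN01.prob_space by (simp add: f_def)
    then show ?thesis by (simp add: prod_Times)
  qed
  also have "\<dots> = complex_of_real (1 / (1 + s) ^ M)"
    using k by (simp add: power_one_over)
  finally show "(\<integral>H. exp (- (s * col_norm2 M k H)) \<partial>channel_measure M K) = 1 / (1 + s) ^ M"
    using of_real_eq_iff by blast
qed

text \<open>Factor at entry \<open>p\<close> of the \<open>(m0, m1)\<close> term of e^(-s ||h_k||^2) |h_k^H h_i|^2,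
  expanded into a sum of products over the entries of \<open>H\<close>.\<close>
definition cross_factor :: "real \<Rightarrow> nat \<Rightarrow> nat \<Rightarrow> nat \<Rightarrow> nat \<Rightarrow> nat \<times> nat \<Rightarrow> complex \<Rightarrow> complex" where
  "cross_factor s k i m0 m1 p = (\<lambda>z.
     if snd p = k then
        of_real (exp (- (s * (cmod z)\<^sup>2))) * (if fst p = m0 then cnj z else 1) * (if fst p = m1 then z else 1)
      else if snd p = i then (if fst p = m0 then z else 1) * (if fst p = m1 then cnj z else 1)
      else 1)"

lemma integrable_cross_factor:
  assumes "s \<ge> 0"
  shows "integrable CN01 (cross_factor s k i m0 m1 p)"
proof (rule integrable_CN01_quadratic_bound[where C = 1])
  fix z
  have pick: "norm (if b then w else 1) \<le> max 1 (cmod z)" if "w = z \<or> w = cnj z" for b w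
    using that by auto
  have factor: "norm (c * (if b1 then w1 else 1) * (if b2 then w2 else 1)) \<le> 1 * (1 + (cmod z)\<^sup>2)"
    if "norm c \<le> 1" "w1 = z \<or> w1 = cnj z" "w2 = z \<or> w2 = cnj z" for c b1 b2 w1 w2
  proof -
    have "norm (c * (if b1 then w1 else 1) * (if b2 then w2 else 1)) \<le> 1 * max 1 (cmod z) * max 1 (cmod z)"
      unfolding norm_mult using that by (intro mult_mono pick) auto
    also have "\<dots> \<le> 1 * (1 + (cmod z)\<^sup>2)"
      by (auto simp: max_def power2_eq_square)
    finally show ?thesis .
  qed
  show "norm (cross_factor s k i m0 m1 p z) \<le> 1 * (1 + (cmod z)\<^sup>2)"
    using factor[of "of_real (exp (- (s * (cmod z)\<^sup>2)))" "cnj z" z] factor[of 1 z "cnj z"] assms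
    by (auto simp: cross_factor_def)
qed (unfold cross_factor_def, measurable)

lemma prod_cross_factor:
  assumes "k \<in> {1..K}" "i \<in> {1..K}" "k \<noteq> i" "m0 \<in> {1..M}" "m1 \<in> {1..M}"
  shows "(\<Prod>p\<in>{1..M} \<times> {1..K}. cross_factor s k i m0 m1 p (H p)) =
    of_real (exp (- (s * col_norm2 M k H))) *
    (cnj (H (m0, k)) * H (m0, i)) * cnj (cnj (H (m1, k)) * H (m1, i))"
proof -
  have "(\<Prod>p\<in>{1..M} \<times> {1..K}. cross_factor s k i m0 m1 p (H p)) =
    (\<Prod>m\<in>{1..M}. cross_factor s k i m0 m1 (m, k) (H (m, k)) * cross_factor s k i m0 m1 (m, i) (H (m, i)))"
    unfolding prod_Times using assms(1-3)
    by (intro prod.cong refl prod_eq_two_factors) (auto simp: cross_factor_def)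
  also have "\<dots> = (\<Prod>m\<in>{1..M}. of_real (exp (- (s * (cmod (H (m, k)))\<^sup>2))) *
      ((if m = m0 then cnj (H (m, k)) else 1) * (if m = m1 then H (m, k) else 1) *
       (if m = m0 then H (m, i) else 1) * (if m = m1 then cnj (H (m, i)) else 1)))"
    using assms(3) by (intro prod.cong refl) (simp add: cross_factor_def)
  also have "\<dots> = (\<Prod>m\<in>{1..M}. of_real (exp (- (s * (cmod (H (m, k)))\<^sup>2)))) *
    (cnj (H (m0, k)) * H (m1, k) * H (m0, i) * cnj (H (m1, i)))"
    using assms(4,5) by (simp add: prod.distrib)
  also have "(\<Prod>m\<in>{1..M}. of_real (exp (- (s * (cmod (H (m, k)))\<^sup>2)))) =
    (of_real (exp (- (s * col_norm2 M k H))) :: complex)"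
    by (simp add: col_norm2_def sum_distrib_left exp_sum flip: of_real_prod sum_negf)
  finally show ?thesis by (simp add: ac_simps)
qed

lemma cmod_col_inner_sq_expand:
  "complex_of_real ((cmod (col_inner M k i H))\<^sup>2 * c) =
   (\<Sum>m0 = 1..M. \<Sum>m1 = 1..M. of_real c * (cnj (H (m0, k)) * H (m0, i)) * cnj (cnj (H (m1, k)) * H (m1, i)))"
proof -
  have "complex_of_real ((cmod (col_inner M k i H))\<^sup>2 * c) =
      of_real c * (col_inner M k i H * cnj (col_inner M k i H))"
    unfolding of_real_mult complex_norm_square by (rule mult.commute)
  also have "col_inner M k i H * cnj (col_inner M k i H) =
      (\<Sum>m0 = 1..M. \<Sum>m1 = 1..M. (cnj (H (m0, k)) * H (m0, i)) * cnj (cnj (H (m1, k)) * H (m1, i)))"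
    by (simp only: col_inner_def cnj_sum sum_product)
  finally show ?thesis
    by (simp only: sum_distrib_left mult.assoc)
qed

lemma integral_cross_factor_diag:
  assumes s: "s \<ge> 0" and ki: "k \<noteq> i"
  shows "(\<integral>z. cross_factor s k i m0 m0 (m, k) z \<partial>CN01) * (\<integral>z. cross_factor s k i m0 m0 (m, i) z \<partial>CN01) =
    (if m = m0 then of_real (1 / (1 + s)\<^sup>2) else of_real (1 / (1 + s)))"
proof (cases "m = m0")
  case True
  have "cross_factor s k i m0 m0 (m, k) = (\<lambda>z. complex_of_real ((cmod z)\<^sup>2 * exp (- (s * (cmod z)\<^sup>2))))"
    "cross_factor s k i m0 m0 (m, i) = (\<lambda>z. complex_of_real ((cmod z)\<^sup>2 * exp (- (0 * (cmod z)\<^sup>2))))"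
    using True ki
    by (auto simp: cross_factor_def fun_eq_iff complex_norm_square[symmetric] mult.commute[of "cnj _"]
        simp del: of_real_power)
  then show ?thesis
    using True by (simp only: integral_complex_of_real CN01_sq_exp_sq(2)[OF s] CN01_sq_exp_sq(2)[of 0]) simp
next
  case False
  interpret CN01: prob_space CN01 by (rule prob_space_CN01)
  have "cross_factor s k i m0 m0 (m, k) = (\<lambda>z. complex_of_real (exp (- (s * (cmod z)\<^sup>2))))"
    "cross_factor s k i m0 m0 (m, i) = (\<lambda>_. 1)"
    using False ki by (auto simp: cross_factor_def)
  then show ?thesis
    using False by (simp add: integral_complex_of_real CN01_exp_sq(2)[OF s] CN01.prob_space)
qed

lemma integral_cross_factor_off_diag:
  assumes "k \<noteq> i" "m0 \<noteq> m1"
  shows "(\<integral>z. cross_factor s k i m0 m1 (m0, i) z \<partial>CN01) = 0"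
  using assms CN01_mean(2) by (simp add: cross_factor_def)

lemma integral_prod_cross_factor:
  assumes s: "s \<ge> 0" and k: "k \<in> {1..K}" and i: "i \<in> {1..K}" and ki: "k \<noteq> i" and m0: "m0 \<in> {1..M}"
  shows "(\<integral>H. (\<Prod>p\<in>{1..M} \<times> {1..K}. cross_factor s k i m0 m1 p (H p)) \<partial>channel_measure M K) =
    (if m0 = m1 then of_real (1 / (1 + s) ^ (M + 1)) else 0)"
proof -
  interpret CN01: prob_space CN01 by (rule prob_space_CN01)
  let ?X = "\<lambda>m. \<integral>z. cross_factor s k i m0 m1 (m, k) z \<partial>CN01"
  let ?Y = "\<lambda>m. \<integral>z. cross_factor s k i m0 m1 (m, i) z \<partial>CN01"
  have "(\<integral>H. (\<Prod>p\<in>{1..M} \<times> {1..K}. cross_factor s k i m0 m1 p (H p)) \<partial>channel_measure M K) =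
      (\<Prod>p\<in>{1..M} \<times> {1..K}. \<integral>z. cross_factor s k i m0 m1 p z \<partial>CN01)"
    by (rule channel_integral_prod(2)) (rule integrable_cross_factor[OF s])
  also have "\<dots> = (\<Prod>m\<in>{1..M}. ?X m * ?Y m)"
    unfolding prod_Times using k i ki
    by (intro prod.cong refl prod_eq_two_factors) (auto simp: cross_factor_def CN01.prob_space)
  also have "\<dots> = (if m0 = m1 then of_real (1 / (1 + s) ^ (M + 1)) else 0)"
  proof (cases "m0 = m1")
    case True
    then have "(\<Prod>m\<in>{1..M}. ?X m * ?Y m) = of_real (1 / (1 + s)\<^sup>2) * of_real (1 / (1 + s)) ^ (M - 1)"
      using m0 by (simp add: integral_cross_factor_diag[OF s ki] prod_if_eq_else_const)
    also have "\<dots> = of_real (1 / (1 + s) ^ (M + 1))"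
      using m0 by (simp add: power_one_over flip: power_add)
    finally show ?thesis using True by simp
  next
    case False
    then show ?thesis
      using m0 integral_cross_factor_off_diag[OF ki False]
      by (auto simp: prod_zero_iff intro!: bexI[of _ m0])
  qed
  finally show ?thesis .
qed

lemma channel_col_inner_sq_exp_col_norm2:
  assumes s: "s \<ge> 0" and k: "k \<in> {1..K}" and i: "i \<in> {1..K}" and ki: "k \<noteq> i"
  shows "integrable (channel_measure M K) (\<lambda>H. (cmod (col_inner M k i H))\<^sup>2 * exp (- (s * col_norm2 M k H)))"
    and "(\<integral>H. (cmod (col_inner M k i H))\<^sup>2 * exp (- (s * col_norm2 M k H)) \<partial>channel_measure M K) =
         real M / (1 + s) ^ (M + 1)"
proof -
  let ?Q = "\<lambda>m0 m1 H. \<Prod>p\<in>{1..M} \<times> {1..K}. cross_factor s k i m0 m1 p (H p)"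
  have expand: "complex_of_real ((cmod (col_inner M k i H))\<^sup>2 * exp (- (s * col_norm2 M k H))) =
      (\<Sum>m0 = 1..M. \<Sum>m1 = 1..M. ?Q m0 m1 H)" for H
    unfolding cmod_col_inner_sq_expand
    by (intro sum.cong refl, subst prod_cross_factor[OF k i ki]) auto
  have int_Q: "integrable (channel_measure M K) (?Q m0 m1)" for m0 m1
    by (rule channel_integral_prod(1)) (rule integrable_cross_factor[OF s])
  have "integrable (channel_measure M K)
      (\<lambda>H. complex_of_real ((cmod (col_inner M k i H))\<^sup>2 * exp (- (s * col_norm2 M k H))))"
    unfolding expand by (intro Bochner_Integration.integrable_sum int_Q)
  then show "integrable (channel_measure M K) (\<lambda>H. (cmod (col_inner M k i H))\<^sup>2 * exp (- (s * col_norm2 M k H)))"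
    by (simp only: complex_of_real_integrable_eq)
  have "complex_of_real (\<integral>H. (cmod (col_inner M k i H))\<^sup>2 * exp (- (s * col_norm2 M k H)) \<partial>channel_measure M K) =
        (\<integral>H. (\<Sum>m0 = 1..M. \<Sum>m1 = 1..M. ?Q m0 m1 H) \<partial>channel_measure M K)"
    unfolding integral_complex_of_real[symmetric] expand ..
  also have "\<dots> = (\<Sum>m0 = 1..M. \<integral>H. (\<Sum>m1 = 1..M. ?Q m0 m1 H) \<partial>channel_measure M K)"
    by (rule Bochner_Integration.integral_sum) (intro Bochner_Integration.integrable_sum int_Q)
  also have "\<dots> = (\<Sum>m0 = 1..M. \<Sum>m1 = 1..M. \<integral>H. ?Q m0 m1 H \<partial>channel_measure M K)"
    by (intro sum.cong refl Bochner_Integration.integral_sum int_Q)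
  also have "\<dots> = (\<Sum>m0 = 1..M. \<Sum>m1 = 1..M. if m0 = m1 then of_real (1 / (1 + s) ^ (M + 1)) else 0)"
    by (intro sum.cong refl integral_prod_cross_factor s k i ki) auto
  also have "\<dots> = of_real (real M / (1 + s) ^ (M + 1))"
    by simp
  finally show "(\<integral>H. (cmod (col_inner M k i H))\<^sup>2 * exp (- (s * col_norm2 M k H)) \<partial>channel_measure M K) =
      real M / (1 + s) ^ (M + 1)"
    using of_real_eq_iff by blast
qed

section \<open>Inverse moments of the column norm\<close>

lemma nn_integral_laplace_inv_sq_col_norm2:
  assumes k: "k \<in> {1..K}" and M: "M \<ge> 3"
  shows "(\<integral>\<^sup>+H. laplace_inv_sq (col_norm2 M k H) \<partial>channel_measure M K) =
    ennreal (1 / ((real M - 1) * (real M - 2)))"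
proof -
  obtain m where m: "M = m + 3" using M by (metis add.commute le_add_diff_inverse)
  have "(\<integral>\<^sup>+H. ennreal 1 * laplace_inv_sq (col_norm2 M k H) \<partial>channel_measure M K) =
      (\<integral>\<^sup>+s. ennreal (s * (1 / (1 + s) ^ M)) * indicator {0..} s \<partial>lborel)"
    using channel_exp_col_norm2[OF _ k]
    by (intro nn_integral_mult_laplace_inv_sq measurable_col_norm2[OF k])
      (auto simp: prob_space_channel_measure prob_space_imp_sigma_finite has_bochner_integral_iff)
  also have "\<dots> = ennreal (1 / (real (m + 1) * real (m + 2)))"
    using nn_integral_div_one_plus_power[of m] by (simp add: m)
  finally show ?thesis by (simp add: m mult.commute)
qed

lemma nn_integral_col_inner_sq_laplace_inv_sq_col_norm2:
  assumes k: "k \<in> {1..K}" and i: "i \<in> {1..K}" and ki: "k \<noteq> i" and M: "M \<ge> 3"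
  shows "(\<integral>\<^sup>+H. ennreal ((cmod (col_inner M k i H))\<^sup>2) * laplace_inv_sq (col_norm2 M k H)
    \<partial>channel_measure M K) = ennreal (1 / (real M - 1))"
proof -
  obtain m where m: "M = m + 3" using M by (metis add.commute le_add_diff_inverse)
  note [measurable] = measurable_col_inner[OF k i]
  have "(\<integral>\<^sup>+H. ennreal ((cmod (col_inner M k i H))\<^sup>2) * laplace_inv_sq (col_norm2 M k H)
      \<partial>channel_measure M K) =
      (\<integral>\<^sup>+s. ennreal (s * (real M / (1 + s) ^ (M + 1))) * indicator {0..} s \<partial>lborel)"
    using channel_col_inner_sq_exp_col_norm2[OF _ k i ki]
    by (intro nn_integral_mult_laplace_inv_sq measurable_col_norm2[OF k])
      (auto simp: prob_space_channel_measure prob_space_imp_sigma_finite has_bochner_integral_iff)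
  also have "\<dots> = (\<integral>\<^sup>+s. ennreal (real M) * (ennreal (s / (1 + s) ^ ((m + 1) + 3)) * indicator {0..} s) \<partial>lborel)"
  proof (intro nn_integral_cong)
    fix s :: real
    have "s * (real M / (1 + s) ^ (M + 1)) = real M * (s / (1 + s) ^ ((m + 1) + 3))"
      by (simp add: m)
    then show "ennreal (s * (real M / (1 + s) ^ (M + 1))) * indicator {0..} s =
        ennreal (real M) * (ennreal (s / (1 + s) ^ ((m + 1) + 3)) * indicator {0..} s)"
      by (auto simp: ennreal_mult[symmetric] simp del: ennreal_mult' split: split_indicator)
  qed
  also have "\<dots> = ennreal (real M) * (\<integral>\<^sup>+s. ennreal (s / (1 + s) ^ ((m + 1) + 3)) * indicator {0..} s \<partial>lborel)"
    by (rule nn_integral_cmult) measurable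
  also have "\<dots> = ennreal (real M * (1 / (real (m + 1 + 1) * real (m + 1 + 2))))"
    by (simp only: nn_integral_div_one_plus_power ennreal_mult'[symmetric])
  also have "real M * (1 / (real (m + 1 + 1) * real (m + 1 + 2))) = 1 / (real M - 1)"
  proof -
    have "real (m + 1 + 1) * real (m + 1 + 2) = (real M - 1) * real M" by (simp add: m algebra_simps)
    then show ?thesis using M by simp
  qed
  finally show ?thesis .
qed

lemma AE_col_norm2_pos:
  assumes k: "k \<in> {1..K}" and M: "M \<ge> 3"
  shows "AE H in channel_measure M K. col_norm2 M k H > 0"
proof -
  note [measurable] = measurable_col_norm2[OF k]
  have "AE H in channel_measure M K. laplace_inv_sq (col_norm2 M k H) \<noteq> \<infinity>"
    using nn_integral_laplace_inv_sq_col_norm2[OF k M] by (intro nn_integral_PInf_AE) simp_all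
  then show ?thesis
    by (rule eventually_mono) (metis laplace_inv_sq_zero infinity_ennreal_def col_norm2_nonneg order_le_less)
qed

lemma has_bochner_integral_inverse_sq_col_norm2:
  assumes k: "k \<in> {1..K}" and M: "M \<ge> 3"
  shows "has_bochner_integral (channel_measure M K) (\<lambda>H. 1 / (col_norm2 M k H)\<^sup>2)
    (1 / ((real M - 1) * (real M - 2)))"
  using nn_integral_laplace_inv_sq_col_norm2[OF k M] M
  by (intro has_bochner_integral_div_sq_of_laplace_inv_sq measurable_col_norm2[OF k]
      AE_col_norm2_pos[OF k M]) auto

lemma has_bochner_integral_col_inner_sq_div_col_norm2_sq:
  assumes k: "k \<in> {1..K}" and i: "i \<in> {1..K}" and ki: "k \<noteq> i" and M: "M \<ge> 3"
  shows "has_bochner_integral (channel_measure M K)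
    (\<lambda>H. (cmod (col_inner M k i H))\<^sup>2 / (col_norm2 M k H)\<^sup>2) (1 / (real M - 1))"
  using nn_integral_col_inner_sq_laplace_inv_sq_col_norm2[OF k i ki M] M measurable_col_inner[OF k i]
  by (intro has_bochner_integral_div_sq_of_laplace_inv_sq measurable_col_norm2[OF k]
      AE_col_norm2_pos[OF k M]) auto

section \<open>The rate bound\<close>

lemma gnorm2_eq_col_norm2: "\<beta> k \<ge> 0 \<Longrightarrow> gnorm2 M \<beta> H k = \<beta> k * col_norm2 M k H"
  by (simp add: gnorm2_def gcol_def col_norm2_def norm_mult power_mult_distrib sum_distrib_left mult.commute)

lemma cmod_ginner_sq:
  assumes "\<beta> k \<ge> 0" "\<beta> i \<ge> 0"
  shows "(cmod (ginner M \<beta> H k i))\<^sup>2 = \<beta> k * \<beta> i * (cmod (col_inner M k i H))\<^sup>2"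
proof -
  have "ginner M \<beta> H k i = complex_of_real (sqrt (\<beta> k) * sqrt (\<beta> i)) * col_inner M k i H"
    by (simp add: ginner_def gcol_def col_inner_def sum_distrib_left ac_simps)
  then show ?thesis using assms by (simp add: norm_mult power_mult_distrib)
qed

lemma Sset_subset: "Sset K k t \<subseteq> {1..K} - {k}"
  by (auto simp: Sset_def)

definition inv_sinr :: "nat \<Rightarrow> nat \<Rightarrow> real \<Rightarrow> (nat \<Rightarrow> real) \<Rightarrow> nat \<Rightarrow> nat \<Rightarrow> (nat \<times> nat \<Rightarrow> complex) \<Rightarrow> real" where
  "inv_sinr M K Pr \<beta> k t H =
     (let \<rho> = Pr / (real M * (\<Sum>i = 1..K. \<beta> i)) in
      (\<rho> * (\<Sum>i\<in>Sset K k t. (cmod (ginner M \<beta> H k i))\<^sup>2) + 1) / (\<rho> * (gnorm2 M \<beta> H k)\<^sup>2))"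

lemma Rdl_eq_integral_inv_sinr:
  "Rdl M K Pr \<beta> k t = (\<integral>H. log 2 (1 + 1 / inv_sinr M K Pr \<beta> k t H) \<partial>channel_measure M K)"
  unfolding Rdl_def inv_sinr_def Let_def inverse_eq_divide[symmetric] inverse_divide ..

context
  fixes M K k t :: nat and Pr :: real and \<beta> :: "nat \<Rightarrow> real"
  assumes M: "M \<ge> 3" and Pr: "Pr > 0" and \<beta>: "\<And>i. i \<in> {1..K} \<Longrightarrow> \<beta> i > 0" and k: "k \<in> {1..K}"
begin

lemma sum_gains_pos: "(\<Sum>i = 1..K. \<beta> i) > 0"
  using k \<beta> by (intro sum_pos) auto

text \<open>This holds also where \<open>col_norm2 M k H = 0\<close>, both sides then being \<open>0\<close> since \<open>x / 0 = 0\<close>.\<close>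
lemma inv_sinr_eq:
  "inv_sinr M K Pr \<beta> k t H =
     (\<Sum>i\<in>Sset K k t. \<beta> i / \<beta> k * ((cmod (col_inner M k i H))\<^sup>2 / (col_norm2 M k H)\<^sup>2)) +
     real M * (\<Sum>i = 1..K. \<beta> i) / (Pr * (\<beta> k)\<^sup>2) * (1 / (col_norm2 M k H)\<^sup>2)"
proof -
  define \<rho> where "\<rho> = Pr / (real M * (\<Sum>i = 1..K. \<beta> i))"
  define W where "W = col_norm2 M k H"
  have \<rho>: "\<rho> > 0" and inv_\<rho>: "1 / \<rho> = real M * (\<Sum>i = 1..K. \<beta> i) / Pr"
    using M Pr sum_gains_pos by (auto simp: \<rho>_def)
  have \<beta>_S: "\<beta> i > 0" if "i \<in> Sset K k t" for i using \<beta> Sset_subset that by blast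
  have "inv_sinr M K Pr \<beta> k t H =
      (\<Sum>i\<in>Sset K k t. \<rho> * (\<beta> k * \<beta> i * (cmod (col_inner M k i H))\<^sup>2)) / (\<rho> * (\<beta> k * W)\<^sup>2) +
      1 / (\<rho> * (\<beta> k * W)\<^sup>2)"
    unfolding inv_sinr_def Let_def \<rho>_def[symmetric] using \<beta>[OF k] \<beta>_S
    by (simp add: W_def gnorm2_eq_col_norm2 cmod_ginner_sq
        sum_distrib_left add_divide_distrib less_imp_le cong: sum.cong)
  also have "(\<Sum>i\<in>Sset K k t. \<rho> * (\<beta> k * \<beta> i * (cmod (col_inner M k i H))\<^sup>2)) / (\<rho> * (\<beta> k * W)\<^sup>2) =
      (\<Sum>i\<in>Sset K k t. \<beta> i / \<beta> k * ((cmod (col_inner M k i H))\<^sup>2 / W\<^sup>2))"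
    unfolding sum_divide_distrib using \<rho> \<beta>[OF k]
    by (intro sum.cong refl) (simp add: field_simps power2_eq_square)
  also have "1 / (\<rho> * (\<beta> k * W)\<^sup>2) = 1 / \<rho> / (\<beta> k)\<^sup>2 * (1 / W\<^sup>2)"
    by (simp add: power_mult_distrib)
  finally show ?thesis
    unfolding inv_\<rho> W_def by simp
qed

lemma has_bochner_integral_inv_sinr:
  "has_bochner_integral (channel_measure M K) (inv_sinr M K Pr \<beta> k t)
     ((Pr * (real M - 2) * \<beta> k * (\<Sum>i\<in>Sset K k t. \<beta> i) + real M * (\<Sum>i = 1..K. \<beta> i)) /
      (Pr * (real M - 1) * (real M - 2) * (\<beta> k)\<^sup>2))"
proof -
  define SB where "SB = (\<Sum>i\<in>Sset K k t. \<beta> i)"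
  define B where "B = (\<Sum>i = 1..K. \<beta> i)"
  have "has_bochner_integral (channel_measure M K) (inv_sinr M K Pr \<beta> k t)
     ((\<Sum>i\<in>Sset K k t. \<beta> i / \<beta> k * (1 / (real M - 1))) +
      real M * B / (Pr * (\<beta> k)\<^sup>2) * (1 / ((real M - 1) * (real M - 2))))"
    unfolding inv_sinr_eq[abs_def] B_def using Sset_subset[of K k t]
    by (intro has_bochner_integral_add has_bochner_integral_sum has_bochner_integral_mult_right
        has_bochner_integral_inverse_sq_col_norm2 has_bochner_integral_col_inner_sq_div_col_norm2_sq k M) auto
  moreover have "(\<Sum>i\<in>Sset K k t. \<beta> i / \<beta> k * (1 / m1)) + real M * B / (Pr * (\<beta> k)\<^sup>2) * (1 / (m1 * m2)) =
      (Pr * m2 * \<beta> k * SB + real M * B) / (Pr * m1 * m2 * (\<beta> k)\<^sup>2)" if "m1 > 0" "m2 > 0" for m1 m2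
    using that Pr \<beta>[OF k] by (simp add: SB_def field_simps power2_eq_square flip: sum_divide_distrib)
  moreover have "real M - 1 > 0" "real M - 2 > 0" using M by auto
  ultimately show ?thesis by (simp add: SB_def B_def)
qed

lemma AE_inv_sinr_pos: "AE H in channel_measure M K. inv_sinr M K Pr \<beta> k t H > 0"
  using AE_col_norm2_pos[OF k M]
proof (rule eventually_mono)
  fix H assume W: "col_norm2 M k H > 0"
  have "\<beta> i / \<beta> k * ((cmod (col_inner M k i H))\<^sup>2 / (col_norm2 M k H)\<^sup>2) \<ge> 0"
    if "i \<in> Sset K k t" for i
  proof -
    have "\<beta> i > 0" using that Sset_subset[of K k t] \<beta> by blast
    then show ?thesis using \<beta>[OF k] by (intro mult_nonneg_nonneg divide_nonneg_nonneg) auto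
  qed
  then show "inv_sinr M K Pr \<beta> k t H > 0"
    unfolding inv_sinr_eq using W M Pr \<beta>[OF k] sum_gains_pos
    by (intro add_nonneg_pos sum_nonneg) auto
qed

lemma integrable_log_one_plus_inverse_inv_sinr:
  "integrable (channel_measure M K) (\<lambda>H. log 2 (1 + 1 / inv_sinr M K Pr \<beta> k t H))"
proof (rule Bochner_Integration.integrable_bound)
  define \<rho> where "\<rho> = Pr / (real M * (\<Sum>i = 1..K. \<beta> i))"
  have \<rho>: "\<rho> > 0" using M Pr sum_gains_pos by (simp add: \<rho>_def)
  show "integrable (channel_measure M K) (\<lambda>H. 2 * sqrt \<rho> * \<beta> k / ln 2 * col_norm2 M k H)"
    by (intro integrable_mult_right integrable_col_norm2 k)
  have "inv_sinr M K Pr \<beta> k t \<in> borel_measurable (channel_measure M K)"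
    using has_bochner_integral_inv_sinr by (auto simp: has_bochner_integral_iff)
  then show "(\<lambda>H. log 2 (1 + 1 / inv_sinr M K Pr \<beta> k t H)) \<in> borel_measurable (channel_measure M K)"
    by measurable
  show "AE H in channel_measure M K.
      norm (log 2 (1 + 1 / inv_sinr M K Pr \<beta> k t H)) \<le> norm (2 * sqrt \<rho> * \<beta> k / ln 2 * col_norm2 M k H)"
  proof (rule AE_I2)
    fix H
    let ?D = "\<rho> * (\<Sum>i\<in>Sset K k t. (cmod (ginner M \<beta> H k i))\<^sup>2) + 1"
    have D: "?D \<ge> 1" using \<rho> by (simp add: sum_nonneg)
    have N: "\<rho> * (gnorm2 M \<beta> H k)\<^sup>2 \<ge> 0" using \<rho> by simp
    have inv: "1 / inv_sinr M K Pr \<beta> k t H = \<rho> * (gnorm2 M \<beta> H k)\<^sup>2 / ?D"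
      by (simp add: inv_sinr_def \<rho>_def)
    have "0 \<le> 1 / inv_sinr M K Pr \<beta> k t H" "1 / inv_sinr M K Pr \<beta> k t H \<le> \<rho> * (gnorm2 M \<beta> H k)\<^sup>2"
      unfolding inv using D N by (auto simp: divide_le_eq mult_le_cancel_left1)
    \<comment> \<open>A square-root bound keeps the dominating function linear in \<open>col_norm2\<close>.\<close>
    then have "log 2 (1 + 1 / inv_sinr M K Pr \<beta> k t H) \<le> 2 * sqrt (\<rho> * (gnorm2 M \<beta> H k)\<^sup>2) / ln 2"
      by (intro order_trans[OF log_one_plus_le_sqrt] divide_right_mono mult_left_mono real_sqrt_le_mono) auto
    also have "\<dots> = 2 * sqrt \<rho> * \<beta> k / ln 2 * col_norm2 M k H"
      using \<beta>[OF k] by (simp add: gnorm2_eq_col_norm2 real_sqrt_mult col_norm2_nonneg)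
    finally have "log 2 (1 + 1 / inv_sinr M K Pr \<beta> k t H) \<le> 2 * sqrt \<rho> * \<beta> k / ln 2 * col_norm2 M k H" .
    moreover have "0 \<le> log 2 (1 + 1 / inv_sinr M K Pr \<beta> k t H)"
      using \<open>0 \<le> 1 / inv_sinr M K Pr \<beta> k t H\<close>
      by (intro zero_le_log_cancel_iff[THEN iffD2]) linarith+
    ultimately show "norm (log 2 (1 + 1 / inv_sinr M K Pr \<beta> k t H)) \<le> norm (2 * sqrt \<rho> * \<beta> k / ln 2 * col_norm2 M k H)"
      by (metis abs_ge_self abs_of_nonneg order_trans real_norm_def)
  qed
qed

end

theorem proposition1:
  fixes M K k t :: nat and Pr :: real and \<beta> :: "nat \<Rightarrow> real"
  assumes "M \<ge> 3" and "K \<ge> 2" and "Pr > 0"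
    and "\<And>i. i \<in> {1..K} \<Longrightarrow> \<beta> i > 0"
    and "k \<in> {1..K}" and "t \<in> {1..K-1}"
  shows "Rdl M K Pr \<beta> k t \<ge>
    log 2 (1 + (Pr * (real M - 1) * (real M - 2) * (\<beta> k)\<^sup>2) /
               (Pr * (real M - 2) * \<beta> k * (\<Sum>i\<in>Sset K k t. \<beta> i)
                + real M * (\<Sum>i = 1..K. \<beta> i)))"
proof -
  interpret prob_space "channel_measure M K" by (rule prob_space_channel_measure)
  note Z = has_bochner_integral_inv_sinr[OF assms(1,3-5), where t = t]
  have "log 2 (1 + 1 / expectation (inv_sinr M K Pr \<beta> k t)) \<le> Rdl M K Pr \<beta> k t"
    unfolding Rdl_eq_integral_inv_sinr using Z assms(1,3-5)
    by (intro log_one_plus_inverse_expectation_le AE_inv_sinr_pos integrable_log_one_plus_inverse_inv_sinr)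
      (auto simp: has_bochner_integral_iff)
  with Z show ?thesis by (simp add: has_bochner_integral_iff)
qed

end
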